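(* Let $s\le\ell$ be positive integers and $\tau\in\mathbb{Z}_{\ge0}$. Then a family $\lambda_{\mathbf{i}},\psi_{\mathbf{j}}\in\mathcal{R}$ ($\mathbf{i}\in\mathcal{I},\mathbf{j}\in\mathcal{J}$) is a solution of degree $\tau$ of Problem 1 if and only if the family of polynomials defined by $(\lambda_{\mathbf{i},0},\dots,\lambda_{\mathbf{i},q-1})=\nu(\lambda_{\mathbf{i}})$ and $(\psi_{\mathbf{j},0},\dots,\psi_{\mathbf{j},q-1})=\nu(\psi_{\mathbf{j}})$ is a monic solution of degree $\tau$ of Problem 2.
   Context: Let $q$ be a prime power; the Hermitian curve over $\mathbb{F}_{q^2}$ has affine equation $Y^q+Y=X^{q+1}$, genus $g=\tfrac12q(q-1)$, affine rational points $P_1,\dots,P_n$ ($n=q^3$) and point at infinity $P_\infty$. $\mathcal{R}=\bigcup_{m\ge0}\mathcal{L}(mP_\infty)=\mathbb{F}_{q^2}[X,Y]/(Y^q+Y-X^{q+1})$ with basis $\{X^iY^j:i\ge0,0\le j<q\}$; $\deg_{\mathcal{H}}f=-v_{P_\infty}(f)$, so $\deg_{\mathcal{H}}(X^iY^j)=iq+j(q+1)$; $f\ne0$ is monic if the coefficient of its basis monomial of largest $\deg_{\mathcal{H}}$ is $1$. Fix integers $h\ge1$ and $m_{\mathrm H}$ with $2(g-1)<m_{\mathrm H}<n$. For a received word $\mathbf{r}=(r_{i,j})\in\mathbb{F}_{q^2}^{h\times n}$ let $\mathbf{R}=(R_1,\dots,R_h)$, $R_i\in\mathcal{R}$, $\deg_{\mathcal{H}}R_i<n+2g$,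 $R_i(P_j)=r_{i,j}$; $G=X^{q^2}-X$. For $\mathbf{i},\mathbf{j}\in\mathbb{Z}_{\ge0}^h$: $|\mathbf{i}|=\sum_\mu i_\mu$, $\mathbf{i}\preceq\mathbf{j}$ componentwise, $\mathbf{a}^{\mathbf{i}}=\prod_\mu a_\mu^{i_\mu}$, $\binom{\mathbf{j}}{\mathbf{i}}=\prod_\mu\binom{j_\mu}{i_\mu}$. Let $\mathcal{I}=\{\mathbf{i}:|\mathbf{i}|<s\}$, $\mathcal{J}=\{\mathbf{j}:1\le|\mathbf{j}|\le\ell\}$, $A_{\mathbf{i},\mathbf{j}}=\binom{\mathbf{j}}{\mathbf{i}}\mathbf{R}^{\mathbf{j}-\mathbf{i}}G^{|\mathbf{i}|}$ ($=0$ if $\mathbf{i}\not\preceq\mathbf{j}$). Problem 1: a solution is a family $\lambda_{\mathbf{i}},\psi_{\mathbf{j}}\in\mathcal{R}$ with $\lambda_{\mathbf{0}}$ monic, $\psi_{\mathbf{j}}=\sum_{\mathbf{i}\in\mathcal{I}}\lambda_{\mathbf{i}}A_{\mathbf{i},\mathbf{j}}$ for $|\mathbf{j}|<s$, $\psi_{\mathbf{j}}\equiv\sum_{\mathbf{i}\in\mathcal{I}}\lambda_{\mathbf{i}}A_{\mathbf{i},\mathbf{j}}\bmod G^s$ for $|\mathbf{j}|\ge s$, $\deg_{\mathcal{H}}\lambda_{\mathbf{0}}\ge\deg_{\mathcal{H}}\lambda_{\mathbf{i}}-|\mathbf{i}|(2g-1)$ ($\mathbf{i}\in\mathcal{I}$),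 $\deg_{\mathcal{H}}\lambda_{\mathbf{0}}\ge\deg_{\mathcal{H}}\psi_{\mathbf{j}}-|\mathbf{j}|m_{\mathrm H}$ ($\mathbf{j}\in\mathcal{J}$); its degree is $\deg_{\mathcal{H}}\lambda_{\mathbf{0}}$. Vector representation: every $a\in\mathcal{R}$ is uniquely $a=\sum_{\iota=0}^{q-1}a_\iota Y^\iota$ with $a_\iota\in\mathbb{F}_{q^2}[X]$; $\nu(a)=(a_0,\dots,a_{q-1})$. Let $\mu(b)\in\mathbb{F}_{q^2}[X]^{q\times(2q-1)}$ have $(\iota,\iota+k)$ entry $b_k$ for $0\le\iota\le q-1$, $0\le k\le q-1$ and zeros elsewhere (rows indexed $0..q-1$, columns $0..2q-2$), and let $\Xi\in\mathbb{F}_{q^2}[X]^{(2q-1)\times q}$ have rows $0..q-1$ equal to the $q\times q$ identity and, for $0\le k\le q-2$, row $q+k$ with entry $X^{q+1}$ in column $k$, $-1$ in column $k+1$, zeros elsewhere. Then $\nu(ab)=\nu(a)\mu(b)\Xi$. Put $\hat A_{\mathbf{i},\mathbf{j}}=\mu(A_{\mathbf{i},\mathbf{j}})\Xi\in\mathbb{F}_{q^2}[X]^{q\times q}$. Write $[q)=\{0,\dots,q-1\}$. Problem 2: find $\lambda_{\mathbf{i},\iota},\psi_{\mathbf{j},\kappa}\in\mathbb{F}_{q^2}[X]$ ($\mathbf{i}\in\mathcal{I},\mathbf{j}\in\mathcal{J},\iota,\kappa\in[q)$), not all zero, such that, with $D=\max_{\iota\in[q)}\{q\deg\lambda_{\mathbf{0},\iota}+\iota(q+1)\}$: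 $\psi_{\mathbf{j},\kappa}=\sum_{\mathbf{i}\in\mathcal{I}}\sum_{\iota=0}^{q-1}\lambda_{\mathbf{i},\iota}(\hat A_{\mathbf{i},\mathbf{j}})_{\iota,\kappa}$ for $1\le|\mathbf{j}|<s$; $\psi_{\mathbf{j},\kappa}\equiv\sum_{\mathbf{i}\in\mathcal{I}}\sum_{\iota=0}^{q-1}\lambda_{\mathbf{i},\iota}(\hat A_{\mathbf{i},\mathbf{j}})_{\iota,\kappa}\bmod G^s$ for $s\le|\mathbf{j}|\le\ell$; $D\ge q\deg\lambda_{\mathbf{i},\iota}+\iota(q+1)-|\mathbf{i}|(2g-1)$ for all $\mathbf{i}\in\mathcal{I},\iota\in[q)$; $D\ge q\deg\psi_{\mathbf{j},\kappa}+\kappa(q+1)-|\mathbf{j}|m_{\mathrm H}$ for all $\mathbf{j}\in\mathcal{J},\kappa\in[q)$ (with $\deg 0=-\infty$). The degree of such a solution is $D$; it is monic if the leading coefficient of the $\lambda_{\mathbf{0},\iota}$ attaining the maximum in $D$ is $1$. *)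

theory Defs
  imports "HOL-Computational_Algebra.Polynomial" "HOL-Computational_Algebra.Primes"
          "HOL-Library.Extended_Real" "HOL-Library.Cardinality"
begin

text \<open>The coordinate ring R = F[X,Y]/(Y^q+Y-X^(q+1)) of the Hermitian curve is modelled as
  (F[X])[Y]/(Y^q+Y-X^(q+1)).  Elements of type 'a poly poly are polynomials in Y whose
  coefficients are polynomials in X.  Elements of R are represented by their unique
  representatives of Y-degree below q (basis X^i Y^j, j<q); ring multiplication is
  multiplication followed by reduction modulo the monic (in Y) polynomial hermY q.\<close>

definition hermY :: "nat \<Rightarrow> 'a::field poly poly" where
  "hermY q = monom 1 q + monom 1 1 - [: monom 1 (q + 1) :]"

definition hred :: "nat \<Rightarrow> 'a::field poly poly \<Rightarrow> 'a poly poly" where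
  "hred q p = pseudo_mod p (hermY q)"

definition inR :: "nat \<Rightarrow> 'a::field poly poly \<Rightarrow> bool" where
  "inR q a \<longleftrightarrow> degree a < q"

definition Gx :: "nat \<Rightarrow> 'a::field poly" where
  "Gx q = monom 1 (q^2) - monom 1 1"

definition GR :: "nat \<Rightarrow> 'a::field poly poly" where
  "GR q = [: Gx q :]"

definition genus :: "nat \<Rightarrow> nat" where
  "genus q = q * (q - 1) div 2"

text \<open>Degree of a vector (v_0,...,v_(q-1)) of polynomials: max of q deg v_i + i(q+1),
  with deg 0 = -infinity.  For a in R, deg_H a = vdeg q (coeff a) since
  deg_H (X^i Y^j) = iq + j(q+1).\<close>
definition vdeg :: "nat \<Rightarrow> (nat \<Rightarrow> 'a::zero poly) \<Rightarrow> ereal" where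
  "vdeg q v = Max ((\<lambda>\<iota>. if v \<iota> = 0 then -\<infinity>
        else ereal (real q * real (degree (v \<iota>)) + real \<iota> * (real q + 1))) ` {..<q})"

definition degH :: "nat \<Rightarrow> 'a::field poly poly \<Rightarrow> ereal" where
  "degH q a = vdeg q (coeff a)"

definition vmonic :: "nat \<Rightarrow> (nat \<Rightarrow> 'a::field poly) \<Rightarrow> bool" where
  "vmonic q v \<longleftrightarrow> (\<exists>\<iota><q. v \<iota> \<noteq> 0) \<and>
     (\<forall>\<iota><q. v \<iota> \<noteq> 0 \<and>
        ereal (real q * real (degree (v \<iota>)) + real \<iota> * (real q + 1)) = vdeg q v
        \<longrightarrow> lead_coeff (v \<iota>) = 1)"

definition monicH :: "nat \<Rightarrow> 'a::field poly poly \<Rightarrow> bool" where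
  "monicH q a \<longleftrightarrow> vmonic q (coeff a)"

text \<open>Multi-indices in Z_{>=0}^h: functions nat => nat vanishing outside {..<h}.\<close>
definition absm :: "nat \<Rightarrow> (nat \<Rightarrow> nat) \<Rightarrow> nat" where
  "absm h i = (\<Sum>\<mu><h. i \<mu>)"

definition Iset :: "nat \<Rightarrow> nat \<Rightarrow> (nat \<Rightarrow> nat) set" where
  "Iset h s = {i. (\<forall>\<mu>\<ge>h. i \<mu> = 0) \<and> absm h i < s}"

definition Jset :: "nat \<Rightarrow> nat \<Rightarrow> (nat \<Rightarrow> nat) set" where
  "Jset h l = {j. (\<forall>\<mu>\<ge>h. j \<mu> = 0) \<and> 1 \<le> absm h j \<and> absm h j \<le> l}"

definition Aent :: "nat \<Rightarrow> nat \<Rightarrow> (nat \<Rightarrow> 'a::field poly poly) \<Rightarrow> (nat \<Rightarrow> nat) \<Rightarrow> (nat \<Rightarrow> nat)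
                     \<Rightarrow> 'a poly poly" where
  "Aent q h R i j = (if (\<forall>\<mu><h. i \<mu> \<le> j \<mu>)
     then hred q ([: [: of_nat (\<Prod>\<mu><h. j \<mu> choose i \<mu>) :] :]
                   * (\<Prod>\<mu><h. R \<mu> ^ (j \<mu> - i \<mu>)) * GR q ^ absm h i)
     else 0)"

definition muM :: "nat \<Rightarrow> (nat \<Rightarrow> 'a::field poly) \<Rightarrow> nat \<Rightarrow> nat \<Rightarrow> 'a poly" where
  "muM q b \<iota> c = (if \<iota> \<le> c \<and> c - \<iota> < q then b (c - \<iota>) else 0)"

definition XiM :: "nat \<Rightarrow> nat \<Rightarrow> nat \<Rightarrow> 'a::field poly" where
  "XiM q c k = (if c < q then (if c = k then 1 else 0)
                else if k = c - q then monom 1 (q + 1)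
                else if k = c - q + 1 then -1 else 0)"

definition Ahat :: "nat \<Rightarrow> 'a::field poly poly \<Rightarrow> nat \<Rightarrow> nat \<Rightarrow> 'a poly" where
  "Ahat q b \<iota> \<kappa> = (\<Sum>c<2 * q - 1. muM q (coeff b) \<iota> c * XiM q c \<kappa>)"

definition prob1_sol ::
  "nat \<Rightarrow> nat \<Rightarrow> nat \<Rightarrow> nat \<Rightarrow> int \<Rightarrow> (nat \<Rightarrow> 'a::field poly poly)
   \<Rightarrow> ((nat \<Rightarrow> nat) \<Rightarrow> 'a poly poly) \<Rightarrow> ((nat \<Rightarrow> nat) \<Rightarrow> 'a poly poly) \<Rightarrow> nat \<Rightarrow> bool" where
  "prob1_sol q h s l mH R lam psi \<tau> \<longleftrightarrow>
     monicH q (lam (\<lambda>_. 0)) \<and>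
     (\<forall>j\<in>Jset h l. absm h j < s \<longrightarrow>
        psi j = hred q (\<Sum>i\<in>Iset h s. lam i * Aent q h R i j)) \<and>
     (\<forall>j\<in>Jset h l. s \<le> absm h j \<longrightarrow>
        (\<exists>c. hred q (psi j - (\<Sum>i\<in>Iset h s. lam i * Aent q h R i j) - c * GR q ^ s) = 0)) \<and>
     (\<forall>i\<in>Iset h s. degH q (lam (\<lambda>_. 0)) \<ge>
        degH q (lam i) - ereal (real (absm h i) * (2 * real (genus q) - 1))) \<and>
     (\<forall>j\<in>Jset h l. degH q (lam (\<lambda>_. 0)) \<ge>
        degH q (psi j) - ereal (real (absm h j) * real_of_int mH)) \<and>
     degH q (lam (\<lambda>_. 0)) = ereal (real \<tau>)"

definition prob2_sol ::
  "nat \<Rightarrow> nat \<Rightarrow> nat \<Rightarrow> nat \<Rightarrow> int \<Rightarrow> (nat \<Rightarrow> 'a::field poly poly)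
   \<Rightarrow> ((nat \<Rightarrow> nat) \<Rightarrow> nat \<Rightarrow> 'a poly) \<Rightarrow> ((nat \<Rightarrow> nat) \<Rightarrow> nat \<Rightarrow> 'a poly) \<Rightarrow> bool" where
  "prob2_sol q h s l mH R lam psi \<longleftrightarrow>
     ((\<exists>i\<in>Iset h s. \<exists>\<iota><q. lam i \<iota> \<noteq> 0) \<or> (\<exists>j\<in>Jset h l. \<exists>\<kappa><q. psi j \<kappa> \<noteq> 0)) \<and>
     (\<forall>j\<in>Jset h l. absm h j < s \<longrightarrow> (\<forall>\<kappa><q.
        psi j \<kappa> = (\<Sum>i\<in>Iset h s. \<Sum>\<iota><q. lam i \<iota> * Ahat q (Aent q h R i j) \<iota> \<kappa>))) \<and>
     (\<forall>j\<in>Jset h l. s \<le> absm h j \<longrightarrow> (\<forall>\<kappa><q.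
        Gx q ^ s dvd (psi j \<kappa> - (\<Sum>i\<in>Iset h s. \<Sum>\<iota><q. lam i \<iota> * Ahat q (Aent q h R i j) \<iota> \<kappa>)))) \<and>
     (\<forall>i\<in>Iset h s. \<forall>\<iota><q. lam i \<iota> \<noteq> 0 \<longrightarrow>
        vdeg q (lam (\<lambda>_. 0)) \<ge> ereal (real q * real (degree (lam i \<iota>)) + real \<iota> * (real q + 1)
                                     - real (absm h i) * (2 * real (genus q) - 1))) \<and>
     (\<forall>j\<in>Jset h l. \<forall>\<kappa><q. psi j \<kappa> \<noteq> 0 \<longrightarrow>
        vdeg q (lam (\<lambda>_. 0)) \<ge> ereal (real q * real (degree (psi j \<kappa>)) + real \<kappa> * (real q + 1)
                                     - real (absm h j) * real_of_int mH))"

definition prob2_monic_sol ::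
  "nat \<Rightarrow> nat \<Rightarrow> nat \<Rightarrow> nat \<Rightarrow> int \<Rightarrow> (nat \<Rightarrow> 'a::field poly poly)
   \<Rightarrow> ((nat \<Rightarrow> nat) \<Rightarrow> nat \<Rightarrow> 'a poly) \<Rightarrow> ((nat \<Rightarrow> nat) \<Rightarrow> nat \<Rightarrow> 'a poly) \<Rightarrow> nat \<Rightarrow> bool" where
  "prob2_monic_sol q h s l mH R lam psi \<tau> \<longleftrightarrow>
     prob2_sol q h s l mH R lam psi \<and> vmonic q (lam (\<lambda>_. 0)) \<and>
     vdeg q (lam (\<lambda>_. 0)) = ereal (real \<tau>)"

end

theory Submission imports Defs begin

text \<open>The vector representation \<nu> is F[X]-linear and injective, and \<nu>(ab) = \<nu>(a)\<mu>(b)\<Xi> holds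
  because row c of \<Xi> is the reduction of Y^c modulo Y^q + Y - X^(q+1).  Hence each equation of
  Problem 1 in R is the system of its q coordinate equations in F[X]; a congruence modulo G^s
  in R is coordinatewise, since G lies in F[X]; and deg_H is the vector degree, so the degree
  constraints of the two problems agree term by term.  Monicity of \<lambda>_0 already makes the
  family of Problem 2 nonzero.  Besides q \<ge> 2 and the reduced form of \<lambda>, \<psi>, no hypothesis on
  the field, the code parameters or the received word is needed.\<close>

lemma pseudo_mod_monic:
  fixes p d :: "'a::idom poly"
  assumes "lead_coeff d = 1"
  shows "d dvd p - pseudo_mod p d"
    and "pseudo_mod p d = 0 \<or> degree (pseudo_mod p d) < degree d"
proof -
  have "d \<noteq> 0" using assms by auto
  obtain t r where tr: "pseudo_divmod p d = (t, r)" by fastforce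
  have r: "pseudo_mod p d = r" by (simp add: pseudo_mod_def tr)
  from pseudo_divmod[OF \<open>d \<noteq> 0\<close> tr] assms
  have "p - r = d * t" and "r = 0 \<or> degree r < degree d" by auto
  then show "d dvd p - pseudo_mod p d" and "pseudo_mod p d = 0 \<or> degree (pseudo_mod p d) < degree d"
    unfolding r by simp_all
qed

lemma pseudo_mod_monic_unique:
  fixes p d r :: "'a::idom poly"
  assumes "lead_coeff d = 1" "degree r < degree d" "d dvd p - r"
  shows "pseudo_mod p d = r"
proof (rule ccontr)
  assume ne: "pseudo_mod p d \<noteq> r"
  have "d dvd (p - r) - (p - pseudo_mod p d)"
    using assms(3) pseudo_mod_monic(1)[OF assms(1)] by (rule dvd_diff)
  then have "d dvd pseudo_mod p d - r" by (simp add: algebra_simps)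
  moreover have "degree (pseudo_mod p d - r) < degree d"
    using pseudo_mod_monic(2)[OF assms(1), of p] assms(2) by (auto intro: degree_diff_less)
  ultimately show False
    using ne dvd_imp_degree_le[of d "pseudo_mod p d - r"] by simp
qed

lemma poly_eq_iff_coeffs_below:
  assumes "degree (a :: 'a::zero poly) < q" "degree b < q"
  shows "a = b \<longleftrightarrow> (\<forall>\<kappa><q. coeff a \<kappa> = coeff b \<kappa>)"
proof
  assume "\<forall>\<kappa><q. coeff a \<kappa> = coeff b \<kappa>"
  then show "a = b"
    using assms by (intro poly_eqI) (metis coeff_eq_0 le_less_trans not_less)
qed simp

lemma coeff_mult_eq_sum_muM:
  fixes a b :: "'a::field poly poly"
  assumes "degree a < q" "degree b < q"
  shows "(\<Sum>\<iota><q. coeff a \<iota> * muM q (coeff b) \<iota> c) = coeff (a * b) c"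
proof -
  let ?T = "{..<q} \<inter> {..c}"
  have "(\<Sum>\<iota><q. coeff a \<iota> * muM q (coeff b) \<iota> c) = (\<Sum>\<iota>\<in>?T. coeff a \<iota> * coeff b (c - \<iota>))"
    using assms(2) by (intro sum.mono_neutral_cong_right) (auto simp: muM_def coeff_eq_0)
  also have "\<dots> = (\<Sum>\<iota>\<le>c. coeff a \<iota> * coeff b (c - \<iota>))"
    using assms(1) by (intro sum.mono_neutral_left) (auto intro!: coeff_eq_0)
  finally show ?thesis by (simp add: coeff_mult)
qed

lemma vdeg_minus_le_iff:
  fixes v :: "nat \<Rightarrow> 'a::zero poly"
  assumes "0 < q"
  shows "vdeg q v - ereal t \<le> x \<longleftrightarrow>
    (\<forall>\<iota><q. v \<iota> \<noteq> 0 \<longrightarrow> ereal (real q * real (degree (v \<iota>)) + real \<iota> * (real q + 1) - t) \<le> x)"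
proof -
  have shift: "ereal a \<le> x + ereal t \<longleftrightarrow> ereal (a - t) \<le> x" for a
    using ereal_minus_le[of t "ereal a" x] by simp
  have "vdeg q v - ereal t \<le> x \<longleftrightarrow> vdeg q v \<le> x + ereal t" by (simp add: ereal_minus_le)
  also have "\<dots> \<longleftrightarrow> (\<forall>\<iota><q. (if v \<iota> = 0 then -\<infinity>
        else ereal (real q * real (degree (v \<iota>)) + real \<iota> * (real q + 1))) \<le> x + ereal t)"
    unfolding vdeg_def using assms by (subst Max_le_iff) auto
  finally show ?thesis by (auto simp: shift)
qed

lemma coeff_hermY: "coeff (hermY q :: 'a::field poly poly) n =
   (if n = q then 1 else 0) + (if n = 1 then 1 else 0) - (if n = 0 then monom 1 (q + 1) else 0)"
  by (simp add: hermY_def coeff_monom flip: monom_0)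

context
  fixes q :: nat
  assumes q: "2 \<le> q"
begin

lemma
  shows degree_hermY: "degree (hermY q :: 'a::field poly poly) = q"
    and lead_coeff_hermY: "lead_coeff (hermY q :: 'a::field poly poly) = 1"
proof -
  have "degree (hermY q :: 'a poly poly) \<le> q"
    using q by (intro degree_le) (simp add: coeff_hermY)
  moreover have "coeff (hermY q :: 'a poly poly) q = 1"
    using q by (simp add: coeff_hermY)
  ultimately show "degree (hermY q :: 'a poly poly) = q"
    by (metis le_antisym le_degree one_neq_zero)
  with \<open>coeff (hermY q) q = 1\<close> show "lead_coeff (hermY q :: 'a poly poly) = 1" by simp
qed

lemma degree_hred: "degree (hred q p :: 'a::field poly poly) < q"
  using pseudo_mod_monic(2)[OF lead_coeff_hermY, of p] q
  by (auto simp: hred_def degree_hermY)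

lemma hermY_dvd_diff_hred: "hermY q dvd (p - hred q p :: 'a::field poly poly)"
  unfolding hred_def by (rule pseudo_mod_monic(1)[OF lead_coeff_hermY])

lemma hred_unique:
  "degree r < q \<Longrightarrow> hermY q dvd (p - r) \<Longrightarrow> hred q p = (r :: 'a::field poly poly)"
  unfolding hred_def
  by (rule pseudo_mod_monic_unique[OF lead_coeff_hermY]) (simp_all add: degree_hermY)

lemma hred_eq_0_iff: "hred q p = 0 \<longleftrightarrow> hermY q dvd (p :: 'a::field poly poly)"
  using hermY_dvd_diff_hred[of p] hred_unique[of 0 p] q by auto

lemma hred_add: "hred q (a + b) = hred q a + (hred q b :: 'a::field poly poly)"
proof (rule hred_unique)
  show "degree (hred q a + hred q b) < q" by (intro degree_add_less degree_hred)
  have "hermY q dvd (a - hred q a) + (b - hred q b)" by (intro dvd_add hermY_dvd_diff_hred)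
  then show "hermY q dvd (a + b - (hred q a + hred q b))" by (simp add: algebra_simps)
qed

lemma hred_sum: "hred q (sum f A) = (\<Sum>x\<in>A. hred q (f x) :: 'a::field poly poly)"
proof -
  have "hred q 0 = (0 :: 'a poly poly)" using q by (intro hred_unique) auto
  then show ?thesis
    by (induction A rule: infinite_finite_induct) (simp_all add: hred_add)
qed

lemma degree_Aent: "degree (Aent q h R i j :: 'a::field poly poly) < q"
  unfolding Aent_def using degree_hred q by auto

lemma hermY_dvd_monom_minus_XiM_row:
  assumes "c < 2 * q - 1"
  shows "hermY q dvd (monom 1 c - (\<Sum>\<kappa><q. monom (XiM q c \<kappa>) \<kappa>) :: 'a::field poly poly)"
proof (cases "c < q")
  case True
  have "(\<Sum>\<kappa><q. monom (XiM q c \<kappa>) \<kappa> :: 'a poly poly) = (\<Sum>\<kappa><q. if \<kappa> = c then monom 1 c else 0)"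
    by (rule sum.cong) (auto simp: XiM_def True)
  also have "\<dots> = monom 1 c" using True by simp
  finally show ?thesis by simp
next
  case False
  define k where "k = c - q"
  have c: "c = q + k" "k + 1 < q" using False assms q unfolding k_def by auto
  have "(\<Sum>\<kappa><q. monom (XiM q c \<kappa>) \<kappa> :: 'a poly poly) =
      (\<Sum>\<kappa><q. (if \<kappa> = k then monom (monom 1 (q + 1)) k else 0)
             + (if \<kappa> = k + 1 then monom (-1) (k + 1) else 0))"
    by (rule sum.cong) (auto simp: XiM_def c)
  also have "\<dots> = monom (monom 1 (q + 1)) k + monom (-1) (k + 1)"
    using c by (simp add: sum.distrib)
  also have "\<dots> = monom 1 c - monom 1 k * hermY q"
    by (simp add: hermY_def c algebra_simps mult_monom flip: minus_monom monom_0)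
  finally show ?thesis by simp
qed

lemma hred_eq_sum_XiM:
  assumes "degree (p :: 'a::field poly poly) < 2 * q - 1"
  shows "hred q p = (\<Sum>\<kappa><q. monom (\<Sum>c<2 * q - 1. coeff p c * XiM q c \<kappa>) \<kappa>)"
    (is "_ = ?r")
proof (rule hred_unique)
  show "degree ?r < q"
    by (rule degree_sum_less) (use assms q in \<open>auto intro: le_less_trans[OF degree_monom_le]\<close>)
  have "{..<2 * q - 1} = {..2 * q - 2}" using q by auto
  then have p: "p = (\<Sum>c<2 * q - 1. [:coeff p c:] * monom 1 c)"
    using poly_as_sum_of_monoms'[of p "2 * q - 2"] assms by (simp add: smult_monom)
  have r: "?r = (\<Sum>c<2 * q - 1. [:coeff p c:] * (\<Sum>\<kappa><q. monom (XiM q c \<kappa>) \<kappa>))"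
    unfolding monom_sum sum_distrib_left by (subst sum.swap) (simp add: smult_monom)
  have "p - ?r = (\<Sum>c<2 * q - 1. [:coeff p c:] * (monom 1 c - (\<Sum>\<kappa><q. monom (XiM q c \<kappa>) \<kappa>)))"
    by (subst p, subst r) (simp add: sum_subtractf right_diff_distrib)
  also have "hermY q dvd \<dots>"
    by (intro dvd_sum dvd_mult hermY_dvd_monom_minus_XiM_row) auto
  finally show "hermY q dvd (p - ?r)" .
qed

lemma coeff_hred_mult_eq_Ahat:
  fixes a b :: "'a::field poly poly"
  assumes "degree a < q" "degree b < q" "\<kappa> < q"
  shows "coeff (hred q (a * b)) \<kappa> = (\<Sum>\<iota><q. coeff a \<iota> * Ahat q b \<iota> \<kappa>)"
proof -
  have "degree (a * b) < 2 * q - 1" using assms degree_mult_le[of a b] by linarith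
  then have "coeff (hred q (a * b)) \<kappa> = (\<Sum>c<2 * q - 1. coeff (a * b) c * XiM q c \<kappa>)"
    using assms(3) by (simp add: hred_eq_sum_XiM coeff_sum coeff_monom)
  also have "\<dots> = (\<Sum>c<2 * q - 1. (\<Sum>\<iota><q. coeff a \<iota> * muM q (coeff b) \<iota> c) * XiM q c \<kappa>)"
    by (simp add: coeff_mult_eq_sum_muM[OF assms(1,2)])
  also have "\<dots> = (\<Sum>\<iota><q. coeff a \<iota> * Ahat q b \<iota> \<kappa>)"
    unfolding Ahat_def sum_distrib_left sum_distrib_right
    by (subst sum.swap) (simp add: mult.assoc)
  finally show ?thesis .
qed

lemma coeff_hred_sum_mult_eq_Ahat:
  fixes lam A :: "'b \<Rightarrow> 'a::field poly poly"
  assumes "\<forall>i\<in>I. degree (lam i) < q \<and> degree (A i) < q" "\<kappa> < q"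
  shows "coeff (hred q (\<Sum>i\<in>I. lam i * A i)) \<kappa> =
         (\<Sum>i\<in>I. \<Sum>\<iota><q. coeff (lam i) \<iota> * Ahat q (A i) \<iota> \<kappa>)"
  unfolding hred_sum coeff_sum
  using assms by (intro sum.cong) (auto intro!: coeff_hred_mult_eq_Ahat)

text \<open>The left-hand side says that a \<equiv> 0 modulo the constant g in R.\<close>

lemma ex_hred_diff_const_mult_eq_0_iff:
  fixes a :: "'a::field poly poly"
  shows "(\<exists>c. hred q (a - c * [:g:]) = 0) \<longleftrightarrow> (\<forall>\<kappa><q. g dvd coeff (hred q a) \<kappa>)"
proof
  assume "\<exists>c. hred q (a - c * [:g:]) = 0"
  then obtain c where "hermY q dvd a - c * [:g:]" by (auto simp: hred_eq_0_iff)
  then have "hermY q dvd (a - c * [:g:]) + (c - hred q c) * [:g:]"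
    by (intro dvd_add dvd_mult2 hermY_dvd_diff_hred)
  then have "hred q a = hred q c * [:g:]"
    using degree_hred[of c] degree_mult_le[of "hred q c" "[:g:]"]
    by (intro hred_unique) (simp_all add: algebra_simps)
  then show "\<forall>\<kappa><q. g dvd coeff (hred q a) \<kappa>" by simp
next
  assume dvd: "\<forall>\<kappa><q. g dvd coeff (hred q a) \<kappa>"
  define c where "c = map_poly (\<lambda>x. x div g) (hred q a)"
  have "hred q a = c * [:g:]"
  proof (rule poly_eqI)
    fix n
    show "coeff (hred q a) n = coeff (c * [:g:]) n"
      using dvd degree_hred[of a] by (cases "n < q") (simp_all add: c_def coeff_map_poly coeff_eq_0)
  qed
  then have "hred q (a - c * [:g:]) = 0"
    using hermY_dvd_diff_hred[of a] by (simp add: hred_eq_0_iff)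
  then show "\<exists>c. hred q (a - c * [:g:]) = 0" ..
qed

lemma hred_eq_iff_Ahat:
  fixes psi :: "'a::field poly poly" and lam A :: "'b \<Rightarrow> 'a poly poly"
  assumes "degree psi < q" "\<forall>i\<in>I. degree (lam i) < q \<and> degree (A i) < q"
  shows "psi = hred q (\<Sum>i\<in>I. lam i * A i) \<longleftrightarrow>
         (\<forall>\<kappa><q. coeff psi \<kappa> = (\<Sum>i\<in>I. \<Sum>\<iota><q. coeff (lam i) \<iota> * Ahat q (A i) \<iota> \<kappa>))"
  using poly_eq_iff_coeffs_below[OF assms(1) degree_hred]
  by (simp add: coeff_hred_sum_mult_eq_Ahat[OF assms(2)])

lemma hred_congruent_mod_GR_pow_iff_Ahat:
  fixes psi :: "'a::field poly poly" and lam A :: "'b \<Rightarrow> 'a poly poly"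
  assumes "degree psi < q" "\<forall>i\<in>I. degree (lam i) < q \<and> degree (A i) < q"
  shows "(\<exists>c. hred q (psi - (\<Sum>i\<in>I. lam i * A i) - c * GR q ^ s) = 0) \<longleftrightarrow>
         (\<forall>\<kappa><q. Gx q ^ s dvd
            (coeff psi \<kappa> - (\<Sum>i\<in>I. \<Sum>\<iota><q. coeff (lam i) \<iota> * Ahat q (A i) \<iota> \<kappa>)))"
proof -
  let ?S = "\<Sum>i\<in>I. lam i * A i"
  have "(psi - ?S) - (psi - hred q ?S) = - (?S - hred q ?S)" by simp
  then have "hermY q dvd (psi - ?S) - (psi - hred q ?S)"
    using hermY_dvd_diff_hred[of ?S] by (simp only: dvd_minus_iff)
  then have "hred q (psi - ?S) = psi - hred q ?S"
    using assms(1) by (intro hred_unique degree_diff_less degree_hred)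
  then show ?thesis
    unfolding GR_def poly_const_pow ex_hred_diff_const_mult_eq_0_iff
    by (simp add: coeff_hred_sum_mult_eq_Ahat[OF assms(2)])
qed

end

theorem theorem6:
  fixes q h s l \<tau> :: nat and mH :: int
    and R :: "nat \<Rightarrow> 'a::{field,finite} poly poly"
    and lam psi :: "(nat \<Rightarrow> nat) \<Rightarrow> 'a poly poly"
  assumes "\<exists>p k. prime p \<and> 0 < k \<and> q = p ^ k"
    and "CARD('a) = q ^ 2"
    and "1 \<le> h"
    and "2 * (int (genus q) - 1) < mH" and "mH < int (q ^ 3)"
    and "1 \<le> s" and "s \<le> l"
    and "\<forall>\<mu><h. inR q (R \<mu>) \<and> degH q (R \<mu>) < ereal (real (q ^ 3 + 2 * genus q))"
    and "\<forall>i\<in>Iset h s. inR q (lam i)"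
    and "\<forall>j\<in>Jset h l. inR q (psi j)"
  shows "prob1_sol q h s l mH R lam psi \<tau> \<longleftrightarrow>
         prob2_monic_sol q h s l mH R (\<lambda>i. coeff (lam i)) (\<lambda>j. coeff (psi j)) \<tau>"
proof -
  obtain p k where "prime p" "0 < k" "q = p ^ k" using assms(1) by blast
  then have q: "2 \<le> q" using prime_ge_2_nat[of p] self_le_power[of p k] by simp
  then have q_pos: "0 < q" by simp
  have deg_lam_A: "\<forall>i\<in>Iset h s. degree (lam i) < q \<and> degree (Aent q h R i j) < q" for j
    using assms(9) by (simp add: inR_def degree_Aent[OF q])
  have deg_psi: "degree (psi j) < q" if "j \<in> Jset h l" for j
    using assms(10) that by (simp add: inR_def)
  have "(\<lambda>_. 0) \<in> Iset h s" using assms(6) by (simp add: Iset_def absm_def)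
  then have nonzero: "vmonic q (coeff (lam (\<lambda>_. 0))) \<Longrightarrow>
      \<exists>i\<in>Iset h s. \<exists>\<iota><q. coeff (lam i) \<iota> \<noteq> 0"
    unfolding vmonic_def by blast
  show ?thesis
    unfolding prob1_sol_def prob2_monic_sol_def prob2_sol_def degH_def monicH_def
      vdeg_minus_le_iff[OF q_pos]
    using nonzero
    by (simp add: hred_eq_iff_Ahat[OF q deg_psi deg_lam_A]
        hred_congruent_mod_GR_pow_iff_Ahat[OF q deg_psi deg_lam_A]) blast
qed

end
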